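(* Every most compact MP-tree on $S$ has at most $n-2$ unlabelled nodes.
   Context: Fix integers $n\ge 2$ and $m\ge 1$, and finite nonempty sets $\Sigma_1,\dots,\Sigma_m$ (the states of characters $1,\dots,m$). A set of species $S=\{S_1,\dots,S_n\}$ is given, each species $S_j$ being an $m$-tuple $(s_{j,1},\dots,s_{j,m})\in\Sigma_1\times\cdots\times\Sigma_m$. A tree on $S$ is a finite unrooted tree (connected acyclic undirected graph) $T$ together with an injective map assigning each species $S_j$ to a node of $T$. Nodes receiving a species are called labelled, the others unlabelled. A fit of $T$ is a map $f$ assigning to every node $v$ a tuple $f(v)\in\Sigma_1\times\cdots\times\Sigma_m$ such that $f(v)=S_j$ whenever $v$ is labelled with $S_j$. The cost of $f$ is $\sum_{\{u,v\}\in E(T)} h(f(u),f(v))$, where $h$ is the Hamming distance. The MP-cost $\mathrm{MP}(T)$ is the minimum cost over all fits of $T$. An MP-tree on $S$ is a tree on $S$ whose MP-cost equals the minimum of $\mathrm{MP}(T)$ over all trees $T$ on $S$. A most compact MP-tree on $S$ is an MP-tree on $S$ having the minimum number of nodes among all MP-trees on $S$. *)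

theory Defs
  imports Main
begin

text \<open>Species are indexed by j < n, characters by i < m. A species/state tuple is a
function nat => 'a whose values at i < m are the character states.
Species data: Sp j i is the state of character i in species j.
A tree on S: node set V (finite set of nat), edges E as ordered pairs (u,v) with u < v
(each undirected edge {u,v} stored once), labelling lab mapping species j < n to nodes.\<close>

definition adj :: "(nat \<times> nat) set \<Rightarrow> nat \<Rightarrow> nat \<Rightarrow> bool" where
  "adj E u v \<longleftrightarrow> (u, v) \<in> E \<or> (v, u) \<in> E"

definition connected_graph :: "nat set \<Rightarrow> (nat \<times> nat) set \<Rightarrow> bool" where
  "connected_graph V E \<longleftrightarrow> (\<forall>u\<in>V. \<forall>v\<in>V. (adj E)\<^sup>*\<^sup>* u v)"

definition is_cycle :: "(nat \<times> nat) set \<Rightarrow> nat list \<Rightarrow> bool" where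
  "is_cycle E cs \<longleftrightarrow> length cs \<ge> 3 \<and> distinct cs
     \<and> (\<forall>k. Suc k < length cs \<longrightarrow> adj E (cs ! k) (cs ! Suc k))
     \<and> adj E (last cs) (hd cs)"

definition acyclic_graph :: "(nat \<times> nat) set \<Rightarrow> bool" where
  "acyclic_graph E \<longleftrightarrow> (\<nexists>cs. is_cycle E cs)"

definition is_tree :: "nat set \<Rightarrow> (nat \<times> nat) set \<Rightarrow> bool" where
  "is_tree V E \<longleftrightarrow> finite V \<and> V \<noteq> {}
     \<and> (\<forall>(u, v)\<in>E. u < v \<and> u \<in> V \<and> v \<in> V)
     \<and> connected_graph V E \<and> acyclic_graph E"

definition tree_on :: "nat \<Rightarrow> nat set \<Rightarrow> (nat \<times> nat) set \<Rightarrow> (nat \<Rightarrow> nat) \<Rightarrow> bool" where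
  "tree_on n V E lab \<longleftrightarrow> is_tree V E \<and> lab ` {..<n} \<subseteq> V \<and> inj_on lab {..<n}"

definition hamming :: "nat \<Rightarrow> (nat \<Rightarrow> 'a) \<Rightarrow> (nat \<Rightarrow> 'a) \<Rightarrow> nat" where
  "hamming m x y = card {i. i < m \<and> x i \<noteq> y i}"

definition is_fit ::
  "nat \<Rightarrow> (nat \<Rightarrow> 'a set) \<Rightarrow> nat \<Rightarrow> (nat \<Rightarrow> nat \<Rightarrow> 'a) \<Rightarrow> nat set \<Rightarrow> (nat \<Rightarrow> nat)
    \<Rightarrow> (nat \<Rightarrow> nat \<Rightarrow> 'a) \<Rightarrow> bool" where
  "is_fit m \<Sigma> n Sp V lab f \<longleftrightarrow>
     (\<forall>v\<in>V. \<forall>i<m. f v i \<in> \<Sigma> i) \<and> (\<forall>j<n. \<forall>i<m. f (lab j) i = Sp j i)"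

definition fit_cost :: "nat \<Rightarrow> (nat \<times> nat) set \<Rightarrow> (nat \<Rightarrow> nat \<Rightarrow> 'a) \<Rightarrow> nat" where
  "fit_cost m E f = (\<Sum>(u, v)\<in>E. hamming m (f u) (f v))"

definition MP_cost ::
  "nat \<Rightarrow> (nat \<Rightarrow> 'a set) \<Rightarrow> nat \<Rightarrow> (nat \<Rightarrow> nat \<Rightarrow> 'a) \<Rightarrow> nat set \<Rightarrow> (nat \<times> nat) set
    \<Rightarrow> (nat \<Rightarrow> nat) \<Rightarrow> nat" where
  "MP_cost m \<Sigma> n Sp V E lab = (LEAST c. \<exists>f. is_fit m \<Sigma> n Sp V lab f \<and> fit_cost m E f = c)"

definition opt_MP :: "nat \<Rightarrow> (nat \<Rightarrow> 'a set) \<Rightarrow> nat \<Rightarrow> (nat \<Rightarrow> nat \<Rightarrow> 'a) \<Rightarrow> nat" where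
  "opt_MP m \<Sigma> n Sp = (LEAST c. \<exists>V E lab. tree_on n V E lab \<and> MP_cost m \<Sigma> n Sp V E lab = c)"

definition MP_tree ::
  "nat \<Rightarrow> (nat \<Rightarrow> 'a set) \<Rightarrow> nat \<Rightarrow> (nat \<Rightarrow> nat \<Rightarrow> 'a) \<Rightarrow> nat set \<Rightarrow> (nat \<times> nat) set
    \<Rightarrow> (nat \<Rightarrow> nat) \<Rightarrow> bool" where
  "MP_tree m \<Sigma> n Sp V E lab \<longleftrightarrow> tree_on n V E lab \<and> MP_cost m \<Sigma> n Sp V E lab = opt_MP m \<Sigma> n Sp"

definition most_compact_MP_tree ::
  "nat \<Rightarrow> (nat \<Rightarrow> 'a set) \<Rightarrow> nat \<Rightarrow> (nat \<Rightarrow> nat \<Rightarrow> 'a) \<Rightarrow> nat set \<Rightarrow> (nat \<times> nat) set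
    \<Rightarrow> (nat \<Rightarrow> nat) \<Rightarrow> bool" where
  "most_compact_MP_tree m \<Sigma> n Sp V E lab \<longleftrightarrow> MP_tree m \<Sigma> n Sp V E lab
     \<and> (\<forall>V' E' lab'. MP_tree m \<Sigma> n Sp V' E' lab' \<longrightarrow> card V \<le> card V')"

end

theory Submission
  imports Defs
begin

text \<open>In a most compact MP-tree every unlabelled node has degree at least 3. A leaf can be
deleted, and a node of degree two can be suppressed by replacing its two edges with one edge
joining its neighbours; by the triangle inequality for the Hamming distance neither operation
increases the cost of an optimal fit, so either would give an MP-tree with fewer nodes.
With \<open>u\<close> unlabelled nodes, counting degrees in the tree gives
\<open>n + 3u \<le> 2|E| \<le> 2(n + u - 1)\<close>, i.e. \<open>u \<le> n - 2\<close>.\<close>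

definition edges_on :: "nat set \<Rightarrow> (nat \<times> nat) set \<Rightarrow> bool" where
  "edges_on V E \<longleftrightarrow> (\<forall>(u, w)\<in>E. u < w \<and> u \<in> V \<and> w \<in> V)"

definition neighbours :: "(nat \<times> nat) set \<Rightarrow> nat \<Rightarrow> nat set" where
  "neighbours E v = {w. adj E v w}"

definition del_vertex :: "(nat \<times> nat) set \<Rightarrow> nat \<Rightarrow> (nat \<times> nat) set" where
  "del_vertex E v = {e \<in> E. fst e \<noteq> v \<and> snd e \<noteq> v}"

lemma is_tree_iff:
  "is_tree V E \<longleftrightarrow> finite V \<and> V \<noteq> {} \<and> edges_on V E \<and> connected_graph V E \<and> acyclic_graph E"
  by (simp add: is_tree_def edges_on_def)

lemma adj_commute: "adj E u v \<longleftrightarrow> adj E v u"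
  by (auto simp: adj_def)

lemma adj_mono: "adj E u v \<Longrightarrow> E \<subseteq> F \<Longrightarrow> adj F u v"
  by (auto simp: adj_def)

lemma rtranclp_adj_commute: "(adj E)\<^sup>*\<^sup>* u v \<Longrightarrow> (adj E)\<^sup>*\<^sup>* v u"
  by (rule sympD[OF symp_rtranclp]) (auto intro: sympI simp: adj_commute)

lemma rtranclp_adj_mono: "(adj E)\<^sup>*\<^sup>* u v \<Longrightarrow> E \<subseteq> F \<Longrightarrow> (adj F)\<^sup>*\<^sup>* u v"
  by (metis adj_mono mono_rtranclp)

lemma rtranclp_lift: "(\<And>y z. R y z \<Longrightarrow> S\<^sup>*\<^sup>* y z) \<Longrightarrow> R\<^sup>*\<^sup>* x w \<Longrightarrow> S\<^sup>*\<^sup>* x w"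
  using rtranclp_mono[of R "S\<^sup>*\<^sup>*"] by auto

lemma adj_del_vertex: "adj (del_vertex E v) a b \<longleftrightarrow> adj E a b \<and> a \<noteq> v \<and> b \<noteq> v"
  by (auto simp: adj_def del_vertex_def)

lemma del_vertex_subset: "del_vertex E v \<subseteq> E"
  by (auto simp: del_vertex_def)

lemma edges_on_del_vertex: "edges_on V E \<Longrightarrow> edges_on (V - {v}) (del_vertex E v)"
  by (auto simp: edges_on_def del_vertex_def)

lemma edges_on_finite: "edges_on V E \<Longrightarrow> finite V \<Longrightarrow> finite E"
  by (rule finite_subset[of _ "V \<times> V"]) (auto simp: edges_on_def)

lemma edges_on_adj: "edges_on V E \<Longrightarrow> adj E u w \<Longrightarrow> u \<in> V \<and> w \<in> V \<and> u \<noteq> w"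
  by (auto simp: edges_on_def adj_def)

lemma edges_on_less: "edges_on V E \<Longrightarrow> (u, w) \<in> E \<Longrightarrow> u < w"
  by (auto simp: edges_on_def)

lemma edges_on_asym: "edges_on V E \<Longrightarrow> (u, w) \<in> E \<Longrightarrow> (w, u) \<notin> E"
  using edges_on_less[of V E u w] edges_on_less[of V E w u] by auto

lemma neighbours_subset: "edges_on V E \<Longrightarrow> neighbours E v \<subseteq> V"
  by (auto simp: neighbours_def dest: edges_on_adj)

lemma neighbours_nonempty:
  assumes "connected_graph V E" "v \<in> V" "w \<in> V" "w \<noteq> v"
  shows "neighbours E v \<noteq> {}"
proof -
  have "(adj E)\<^sup>*\<^sup>* v w" using assms by (auto simp: connected_graph_def)
  then obtain y where "adj E v y" using assms(4) by (metis converse_rtranclpE)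
  then show ?thesis by (auto simp: neighbours_def)
qed

lemma is_cycle_iff:
  "is_cycle E cs \<longleftrightarrow>
     3 \<le> length cs \<and> distinct cs \<and> successively (adj E) cs \<and> adj E (last cs) (hd cs)"
  by (simp add: is_cycle_def successively_conv_nth)

lemma successively_adj_rtranclp:
  "successively (adj E) ps \<Longrightarrow> ps \<noteq> [] \<Longrightarrow> (adj E)\<^sup>*\<^sup>* (hd ps) (last ps)"
  by (induction "adj E" ps rule: successively.induct) (auto intro: converse_rtranclp_into_rtranclp)

lemma rtranclp_adj_path:
  assumes "(adj E)\<^sup>*\<^sup>* x y"
  obtains ps where "ps \<noteq> []" "hd ps = x" "last ps = y" "successively (adj E) ps" "distinct ps"
proof -
  from assms have "\<exists>ps. ps \<noteq> [] \<and> hd ps = x \<and> last ps = y \<and> successively (adj E) ps \<and> distinct ps"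
  proof (induction rule: rtranclp_induct)
    case base
    show ?case by (intro exI[of _ "[x]"]) simp
  next
    case (step y z)
    then obtain ps where ps: "ps \<noteq> []" "hd ps = x" "last ps = y" "successively (adj E) ps" "distinct ps"
      by blast
    show ?case
    proof (cases "z \<in> set ps")
      case True
      then obtain xs ys where ps_eq: "ps = xs @ z # ys" by (meson split_list)
      then have "successively (adj E) (xs @ [z])"
        using ps(4) by (simp add: successively_append_iff)
      then show ?thesis
        using ps ps_eq by (intro exI[of _ "xs @ [z]"]) (cases xs; auto)
    next
      case False
      then show ?thesis
        using ps step by (intro exI[of _ "ps @ [z]"]) (auto simp: successively_append_iff)
    qed
  qed
  then show ?thesis using that by blast
qed

lemma acyclic_graph_subset: "acyclic_graph F \<Longrightarrow> E \<subseteq> F \<Longrightarrow> acyclic_graph E"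
  unfolding acyclic_graph_def is_cycle_iff by (metis adj_mono successively_mono)

lemma acyclic_graph_bridge:
  assumes acyc: "acyclic_graph E" and edges: "edges_on V E" and cd: "(c, d) \<in> E"
  shows "\<not> (adj (E - {(c, d)}))\<^sup>*\<^sup>* c d"
proof
  assume "(adj (E - {(c, d)}))\<^sup>*\<^sup>* c d"
  then obtain ps where ps: "ps \<noteq> []" "hd ps = c" "last ps = d"
    "successively (adj (E - {(c, d)})) ps" "distinct ps"
    by (rule rtranclp_adj_path)
  have "c < d" using edges cd by (rule edges_on_less)
  \<comment> \<open>a path with two vertices would be the edge itself, as edges are stored in one orientation\<close>
  have "3 \<le> length ps"
  proof (cases ps rule: remdups_adj.cases)
    case (3 x y xs)
    have "xs \<noteq> []" using 3 ps edges_on_asym[OF edges cd] by (auto simp: adj_def)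
    then show ?thesis using 3 by (simp add: Suc_le_eq)
  qed (use ps \<open>c < d\<close> in auto)
  moreover have "successively (adj E) ps"
    using ps(4) by (rule successively_mono) (auto elim: adj_mono)
  moreover have "adj E (last ps) (hd ps)" using ps cd by (auto simp: adj_def)
  ultimately have "is_cycle E ps" using ps by (simp add: is_cycle_iff)
  then show False using acyc by (auto simp: acyclic_graph_def)
qed

lemma acyclic_graph_if_bridges:
  assumes bridges: "\<And>c d. (c, d) \<in> E \<Longrightarrow> (adj (E - {(c, d)}))\<^sup>*\<^sup>* c d \<Longrightarrow> False"
  shows "acyclic_graph E"
  unfolding acyclic_graph_def
proof
  assume "\<exists>cs. is_cycle E cs"
  then obtain cs where "is_cycle E cs" by blast
  moreover obtain x0 x1 r where "cs = x0 # x1 # r"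
    using calculation by (cases cs rule: remdups_adj.cases) (auto simp: is_cycle_iff)
  ultimately have r: "r \<noteq> []" "distinct (x0 # x1 # r)" "successively (adj E) (x0 # x1 # r)"
    "adj E (last r) x0"
    by (auto simp: is_cycle_iff Suc_le_eq split: if_splits)
  obtain e where e: "e \<in> E" "e = (x0, x1) \<or> e = (x1, x0)"
    using r(3) by (auto simp: adj_def)
  \<comment> \<open>the rest of the cycle bypasses the edge e\<close>
  have "successively (adj (E - {e})) ((x1 # r) @ [x0])"
    using r e by (auto simp: successively_append_iff successively_Cons adj_def
        elim!: successively_mono)
  then have "(adj (E - {e}))\<^sup>*\<^sup>* x1 x0"
    using successively_adj_rtranclp by fastforce
  then show False
    using bridges e rtranclp_adj_commute by fastforce
qed

lemma card_neighbours:
  assumes "edges_on V E" "finite V"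
  shows "card (neighbours E v) = card {e \<in> E. fst e = v} + card {e \<in> E. snd e = v}"
proof -
  let ?out = "{e \<in> E. fst e = v}" and ?inc = "{e \<in> E. snd e = v}"
  have finE: "finite E" using assms by (rule edges_on_finite)
  have "neighbours E v = snd ` ?out \<union> fst ` ?inc"
    by (auto simp: neighbours_def adj_def image_iff)
  moreover have "snd ` ?out \<inter> fst ` ?inc = {}"
    using edges_on_asym[OF assms(1)] by auto
  moreover have "card (snd ` ?out) = card ?out" "card (fst ` ?inc) = card ?inc"
    by (auto intro!: card_image simp: inj_on_def prod_eq_iff)
  ultimately show ?thesis
    using finE card_Un_disjoint[of "snd ` ?out" "fst ` ?inc"] by simp
qed

lemma sum_card_neighbours:
  assumes "edges_on V E" "finite V"
  shows "(\<Sum>v\<in>V. card (neighbours E v)) = 2 * card E"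
proof -
  have finE: "finite E" using assms by (rule edges_on_finite)
  have "fst ` E \<subseteq> V" "snd ` E \<subseteq> V" using assms(1) by (auto simp: edges_on_def)
  then have "(\<Sum>v\<in>V. card {e \<in> E. fst e = v}) = card E"
    "(\<Sum>v\<in>V. card {e \<in> E. snd e = v}) = card E"
    using sum.group[OF finE assms(2), of _ "\<lambda>_. 1::nat"] by auto
  then show ?thesis by (simp add: card_neighbours[OF assms] sum.distrib)
qed

lemma branching_graph_not_acyclic:
  assumes finV: "finite V" and "V \<noteq> {}" and edges: "edges_on V E"
    and branch: "\<And>x z. x \<in> V \<Longrightarrow> \<exists>y. adj E x y \<and> y \<noteq> z"
  shows "\<not> acyclic_graph E"
proof
  assume acyc: "acyclic_graph E"
  \<comment> \<open>a longest path cannot be extended, so its end vertex closes a cycle\<close>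
  let ?path = "\<lambda>ps. ps \<noteq> [] \<and> distinct ps \<and> set ps \<subseteq> V \<and> successively (adj E) ps"
  obtain x where "x \<in> V" using assms(2) by blast
  then have "?path [x]" by simp
  moreover have "length ps < Suc (card V)" if "?path ps" for ps
  proof -
    have "length ps = card (set ps)" using that by (simp add: distinct_card)
    also have "\<dots> \<le> card V" using that finV by (intro card_mono) auto
    finally show ?thesis by simp
  qed
  ultimately obtain ps where ps: "?path ps" and longest: "\<And>qs. ?path qs \<Longrightarrow> length qs \<le> length ps"
    using ex_has_greatest_nat[of ?path "[x]" length "Suc (card V)"] by blast
  define prev where "prev = (if 2 \<le> length ps then ps ! (length ps - 2) else last ps)"
  obtain y where y: "adj E (last ps) y" "y \<noteq> prev"
    using branch ps last_in_set by blast
  have "y \<in> set ps"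
  proof (rule ccontr)
    assume "y \<notin> set ps"
    moreover have "y \<in> V" using y edges_on_adj[OF edges] by blast
    moreover have "successively (adj E) (ps @ [y])"
      using ps y by (simp add: successively_append_iff)
    ultimately have "?path (ps @ [y])" using ps by simp
    then show False using longest[of "ps @ [y]"] by simp
  qed
  then obtain xs ys where ps_eq: "ps = xs @ y # ys" by (meson split_list)
  have "ys \<noteq> []" using ps_eq y edges_on_adj[OF edges] by force
  moreover have "length ys \<noteq> 1"
    using ps_eq y by (auto simp: prev_def nth_append length_Suc_conv)
  ultimately have "3 \<le> length (y # ys)" by (cases ys) (auto simp: Suc_le_eq)
  moreover have "successively (adj E) (y # ys)" "distinct (y # ys)"
    using ps ps_eq by (auto simp: successively_append_iff)
  moreover have "adj E (last (y # ys)) (hd (y # ys))"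
    using y ps_eq \<open>ys \<noteq> []\<close> by (simp add: adj_commute)
  ultimately have "is_cycle E (y # ys)" by (simp add: is_cycle_iff)
  then show False using acyc by (auto simp: acyclic_graph_def)
qed

lemma acyclic_graph_ex_degree_le_1:
  assumes finV: "finite V" and "V \<noteq> {}" and edges: "edges_on V E" and acyc: "acyclic_graph E"
  shows "\<exists>x\<in>V. card (neighbours E x) \<le> 1"
proof (rule ccontr)
  assume no_leaf: "\<not> ?thesis"
  have "\<exists>y. adj E x y \<and> y \<noteq> z" if "x \<in> V" for x z
  proof -
    have "finite (neighbours E x)" using finite_subset[OF neighbours_subset[OF edges] finV] .
    moreover have "\<not> card (neighbours E x) \<le> Suc 0" using no_leaf that by auto
    ultimately obtain a b where "a \<in> neighbours E x" "b \<in> neighbours E x" "a \<noteq> b"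
      by (auto simp: card_le_Suc0_iff_eq)
    then show ?thesis by (auto simp: neighbours_def)
  qed
  then show False using branching_graph_not_acyclic[OF finV \<open>V \<noteq> {}\<close> edges] acyc by blast
qed

lemma card_edges_le_del_vertex:
  assumes "edges_on V E" "finite V"
  shows "card E \<le> card (del_vertex E x) + card (neighbours E x)"
proof -
  let ?out = "{e \<in> E. fst e = x}" and ?inc = "{e \<in> E. snd e = x}"
  have finE: "finite E" using assms by (rule edges_on_finite)
  have "E \<subseteq> del_vertex E x \<union> ?out \<union> ?inc" by (auto simp: del_vertex_def)
  then have "card E \<le> card (del_vertex E x \<union> ?out \<union> ?inc)"
    using finE finite_subset[OF del_vertex_subset finE] by (intro card_mono) auto
  also have "\<dots> \<le> card (del_vertex E x) + card ?out + card ?inc"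
    by (meson card_Un_le add_right_mono order_trans)
  finally show ?thesis using card_neighbours[OF assms, of x] by simp
qed

lemma acyclic_graph_card_edges:
  "finite V \<Longrightarrow> edges_on V E \<Longrightarrow> acyclic_graph E \<Longrightarrow> card E \<le> card V - 1"
proof (induction V arbitrary: E rule: finite_psubset_induct)
  case (psubset V)
  show ?case
  proof (cases "V = {}")
    case True
    then have "E = {}" using psubset.prems by (auto simp: edges_on_def)
    then show ?thesis by simp
  next
    case False
    then obtain x where x: "x \<in> V" and leaf: "card (neighbours E x) \<le> 1"
      using acyclic_graph_ex_degree_le_1 psubset by blast
    have "card (del_vertex E x) \<le> card (V - {x}) - 1"
    proof (rule psubset.IH)
      show "V - {x} \<subset> V" using x by auto
      show "edges_on (V - {x}) (del_vertex E x)"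
        using psubset.prems(1) by (rule edges_on_del_vertex)
      show "acyclic_graph (del_vertex E x)"
        using psubset.prems(2) del_vertex_subset by (rule acyclic_graph_subset)
    qed
    moreover have "card (neighbours E x) \<le> card (V - {x})"
      using psubset.hyps edges_on_adj[OF psubset.prems(1)]
      by (intro card_mono) (auto simp: neighbours_def)
    moreover have "card (V - {x}) = card V - 1" using x psubset.hyps by simp
    ultimately show ?thesis
      using leaf card_edges_le_del_vertex[OF psubset.prems(1) psubset.hyps, of x] by linarith
  qed
qed

lemma connected_graph_bypass_vertex:
  assumes conn: "connected_graph V E" and v: "v \<in> V"
    and keep: "\<And>y z. adj E y z \<Longrightarrow> y \<noteq> v \<Longrightarrow> z \<noteq> v \<Longrightarrow> adj E' y z"
    and bypass: "\<And>a b. a \<in> neighbours E v \<Longrightarrow> b \<in> neighbours E v \<Longrightarrow> (adj E')\<^sup>*\<^sup>* a b"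
  shows "connected_graph (V - {v}) E'"
  unfolding connected_graph_def
proof (intro ballI)
  fix u w assume u: "u \<in> V - {v}" and w: "w \<in> V - {v}"
  have "(adj E)\<^sup>*\<^sup>* u w" using conn u w by (auto simp: connected_graph_def)
  then have "(w \<noteq> v \<longrightarrow> (adj E')\<^sup>*\<^sup>* u w) \<and> (w = v \<longrightarrow> (\<forall>a\<in>neighbours E v. (adj E')\<^sup>*\<^sup>* u a))"
  proof (induction rule: rtranclp_induct)
    case base
    then show ?case using u by simp
  next
    case (step y z)
    show ?case
    proof (cases "y = v")
      case True
      then have "z \<in> neighbours E v" using step(2) by (simp add: neighbours_def)
      then show ?thesis using step.IH True bypass by (cases "z = v") auto
    next
      case False
      then have uy: "(adj E')\<^sup>*\<^sup>* u y" using step.IH by simp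
      show ?thesis
      proof (cases "z = v")
        case True
        then have "y \<in> neighbours E v" using step(2) by (simp add: neighbours_def adj_commute)
        then show ?thesis using True uy bypass by (meson rtranclp_trans)
      next
        case False
        then show ?thesis using uy keep step(2) \<open>y \<noteq> v\<close> by (auto intro: rtranclp.rtrancl_into_rtrancl)
      qed
    qed
  qed
  then show "(adj E')\<^sup>*\<^sup>* u w" using w by simp
qed

lemma is_tree_del_leaf:
  assumes tree: "is_tree V E" and v: "v \<in> V" and leaf: "neighbours E v = {a}"
  shows "is_tree (V - {v}) (del_vertex E v)"
proof -
  have edges: "edges_on V E" and conn: "connected_graph V E" and acyc: "acyclic_graph E"
    and "finite V" using tree by (auto simp: is_tree_iff)
  have "a \<in> V - {v}" using leaf edges_on_adj[OF edges] by (auto simp: neighbours_def)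
  moreover have "connected_graph (V - {v}) (del_vertex E v)"
    using conn v by (rule connected_graph_bypass_vertex) (auto simp: adj_del_vertex leaf)
  moreover have "acyclic_graph (del_vertex E v)"
    using acyc del_vertex_subset by (rule acyclic_graph_subset)
  ultimately show ?thesis
    using \<open>finite V\<close> edges_on_del_vertex[OF edges] by (auto simp: is_tree_iff)
qed

definition suppress_vertex :: "(nat \<times> nat) set \<Rightarrow> nat \<Rightarrow> nat \<Rightarrow> nat \<Rightarrow> (nat \<times> nat) set" where
  "suppress_vertex E v a b = insert (min a b, max a b) (del_vertex E v)"

lemma adj_suppress_vertex:
  "adj (suppress_vertex E v a b - F) y z \<longleftrightarrow>
     adj (del_vertex E v - F) y z \<or> {y, z} = {a, b} \<and> (min a b, max a b) \<notin> F"
  by (auto simp: suppress_vertex_def adj_def doubleton_eq_iff min_def max_def)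

lemma acyclic_graph_suppress_vertex:
  assumes acyc: "acyclic_graph E" and edges: "edges_on V E"
    and nb: "neighbours E v = {a, b}" and "a \<noteq> b"
  shows "acyclic_graph (suppress_vertex E v a b)"
proof -
  let ?E' = "suppress_vertex E v a b"
  have "adj E v a" "adj E v b" using nb by (auto simp: neighbours_def)
  then obtain ea eb where ea: "ea \<in> E" "ea = (v, a) \<or> ea = (a, v)"
    and eb: "eb \<in> E" "eb = (v, b) \<or> eb = (b, v)"
    by (auto simp: adj_def)
  show ?thesis
  proof (rule acyclic_graph_if_bridges)
    fix c d assume cd: "(c, d) \<in> ?E'"
    assume path: "(adj (?E' - {(c, d)}))\<^sup>*\<^sup>* c d"
    show False
    proof (cases "(c, d) = (min a b, max a b)")
      case True
      \<comment> \<open>the remaining path from a to b avoids v, so together with eb it bypasses ea\<close>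
      have "?E' - {(c, d)} \<subseteq> E - {ea}"
        using True ea by (auto simp: suppress_vertex_def del_vertex_def)
      with path have "(adj (E - {ea}))\<^sup>*\<^sup>* c d" by (rule rtranclp_adj_mono)
      then have "(adj (E - {ea}))\<^sup>*\<^sup>* a b"
        using True rtranclp_adj_commute by (cases "a < b") auto
      moreover have "adj (E - {ea}) b v" using ea eb \<open>a \<noteq> b\<close> by (auto simp: adj_def)
      ultimately have "(adj (E - {ea}))\<^sup>*\<^sup>* a v" by (rule rtranclp.rtrancl_into_rtrancl)
      then show False
        using acyclic_graph_bridge[OF acyc edges] ea rtranclp_adj_commute by blast
    next
      case False
      then have cdE: "(c, d) \<in> E" "c \<noteq> v" "d \<noteq> v"
        using cd by (auto simp: suppress_vertex_def del_vertex_def)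
      \<comment> \<open>replace the new edge by the two edges through v\<close>
      have "(adj (E - {(c, d)}))\<^sup>*\<^sup>* y z" if "adj (?E' - {(c, d)}) y z" for y z
      proof (cases "{y, z} = {a, b}")
        case True
        have "adj (E - {(c, d)}) y v" "adj (E - {(c, d)}) v z"
          using True ea eb cdE by (auto simp: adj_def doubleton_eq_iff)
        then show ?thesis by (meson converse_rtranclp_into_rtranclp r_into_rtranclp)
      next
        case False
        then have "adj (del_vertex E v - {(c, d)}) y z"
          using that by (simp add: adj_suppress_vertex)
        then show ?thesis by (auto simp: adj_def del_vertex_def)
      qed
      then have "(adj (E - {(c, d)}))\<^sup>*\<^sup>* c d" using path by (rule rtranclp_lift)
      then show False using acyclic_graph_bridge[OF acyc edges cdE(1)] by blast
    qed
  qed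
qed

lemma is_tree_suppress_vertex:
  assumes tree: "is_tree V E" and v: "v \<in> V" and nb: "neighbours E v = {a, b}" and "a \<noteq> b"
  shows "is_tree (V - {v}) (suppress_vertex E v a b)"
proof -
  have edges: "edges_on V E" and conn: "connected_graph V E" and acyc: "acyclic_graph E"
    and "finite V" using tree by (auto simp: is_tree_iff)
  have ab: "a \<in> V - {v}" "b \<in> V - {v}"
    using nb edges_on_adj[OF edges] by (auto simp: neighbours_def)
  then have "edges_on (V - {v}) (suppress_vertex E v a b)"
    using edges_on_del_vertex[OF edges] \<open>a \<noteq> b\<close>
    by (auto simp: edges_on_def suppress_vertex_def min_def max_def)
  moreover have "connected_graph (V - {v}) (suppress_vertex E v a b)"
    using conn v
  proof (rule connected_graph_bypass_vertex)
    show "adj (suppress_vertex E v a b) y z" if "adj E y z" "y \<noteq> v" "z \<noteq> v" for y z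
      using that adj_suppress_vertex[of E v a b "{}"] by (simp add: adj_del_vertex)
    show "(adj (suppress_vertex E v a b))\<^sup>*\<^sup>* y z" if "y \<in> neighbours E v" "z \<in> neighbours E v" for y z
      using that nb adj_suppress_vertex[of E v a b "{}"]
      by (auto simp: insert_commute)
  qed
  moreover have "acyclic_graph (suppress_vertex E v a b)"
    using acyc edges nb \<open>a \<noteq> b\<close> by (rule acyclic_graph_suppress_vertex)
  ultimately show ?thesis using \<open>finite V\<close> ab by (auto simp: is_tree_iff)
qed

lemma is_tree_card_inner_le:
  assumes tree: "is_tree V E" and "L \<subseteq> V"
    and leaves: "\<And>v. v \<in> L \<Longrightarrow> neighbours E v \<noteq> {}"
    and inner: "\<And>v. v \<in> V - L \<Longrightarrow> 3 \<le> card (neighbours E v)"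
  shows "card (V - L) + 2 \<le> card L"
proof -
  have finV: "finite V" and "V \<noteq> {}" and edges: "edges_on V E" and "acyclic_graph E"
    using tree by (auto simp: is_tree_iff)
  have finL: "finite L" using \<open>L \<subseteq> V\<close> finV by (rule finite_subset)
  have "(\<Sum>v\<in>L. card (neighbours E v)) + (\<Sum>v\<in>V - L. card (neighbours E v)) = 2 * card E"
    using sum.subset_diff[OF \<open>L \<subseteq> V\<close> finV, of "\<lambda>v. card (neighbours E v)"]
      sum_card_neighbours[OF edges finV] by linarith
  moreover have "card E \<le> card V - 1"
    using finV edges \<open>acyclic_graph E\<close> by (rule acyclic_graph_card_edges)
  moreover have "card L \<le> (\<Sum>v\<in>L. card (neighbours E v))"
  proof -
    have "1 \<le> card (neighbours E v)" if "v \<in> L" for v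
      using leaves[OF that] finite_subset[OF neighbours_subset[OF edges] finV]
      by (simp add: Suc_le_eq card_gt_0_iff)
    then show ?thesis using sum_mono[of L "\<lambda>_. 1::nat" "\<lambda>v. card (neighbours E v)"] by simp
  qed
  moreover have "3 * card (V - L) \<le> (\<Sum>v\<in>V - L. card (neighbours E v))"
    using sum_mono[of "V - L" "\<lambda>_. 3::nat" "\<lambda>v. card (neighbours E v)"] inner by simp
  moreover have "card V = card L + card (V - L)" "0 < card V"
    using card_Diff_subset[OF finL \<open>L \<subseteq> V\<close>] card_mono[OF finV \<open>L \<subseteq> V\<close>] finV \<open>V \<noteq> {}\<close>
    by (auto simp: card_gt_0_iff)
  ultimately show ?thesis by linarith
qed

lemma hamming_commute: "hamming m x y = hamming m y x"
  unfolding hamming_def by (metis (no_types, lifting))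

lemma hamming_triangle: "hamming m x z \<le> hamming m x y + hamming m y z"
proof -
  have "{i. i < m \<and> x i \<noteq> z i} \<subseteq> {i. i < m \<and> x i \<noteq> y i} \<union> {i. i < m \<and> y i \<noteq> z i}"
    by auto
  then have "hamming m x z \<le> card ({i. i < m \<and> x i \<noteq> y i} \<union> {i. i < m \<and> y i \<noteq> z i})"
    unfolding hamming_def by (intro card_mono) auto
  also have "\<dots> \<le> hamming m x y + hamming m y z"
    unfolding hamming_def by (rule card_Un_le)
  finally show ?thesis .
qed

lemma fit_cost_mono: "finite E \<Longrightarrow> E' \<subseteq> E \<Longrightarrow> fit_cost m E' f \<le> fit_cost m E f"
  unfolding fit_cost_def by (rule sum_mono2) auto

lemma fit_cost_suppress_vertex:
  assumes edges: "edges_on V E" and "finite V" and nb: "neighbours E v = {a, b}" and "a \<noteq> b"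
  shows "fit_cost m (suppress_vertex E v a b) f \<le> fit_cost m E f"
proof -
  define g where "g = (\<lambda>(u, w). hamming m (f u) (f w))"
  have cost: "fit_cost m F f = sum g F" for F by (simp add: fit_cost_def g_def)
  have finE: "finite E" using edges \<open>finite V\<close> by (rule edges_on_finite)
  have "adj E v a" "adj E v b" using nb by (auto simp: neighbours_def)
  then obtain ea eb where ea: "ea \<in> E" "ea = (v, a) \<or> ea = (a, v)"
    and eb: "eb \<in> E" "eb = (v, b) \<or> eb = (b, v)"
    by (auto simp: adj_def)
  have "g (min a b, max a b) = hamming m (f a) (f b)"
    by (simp add: g_def min_def max_def hamming_commute)
  also have "\<dots> \<le> hamming m (f a) (f v) + hamming m (f v) (f b)"
    by (rule hamming_triangle)
  also have "\<dots> = g ea + g eb"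
    using ea eb hamming_commute[of m "f v"] by (auto simp: g_def)
  also have "\<dots> = sum g {ea, eb}" using ea eb \<open>a \<noteq> b\<close> by auto
  also have "\<dots> \<le> sum g (E - del_vertex E v)"
    using ea eb finE by (intro sum_mono2) (auto simp: del_vertex_def)
  finally have "sum g (suppress_vertex E v a b) \<le> sum g (del_vertex E v) + sum g (E - del_vertex E v)"
    using finite_subset[OF del_vertex_subset finE]
    by (simp add: suppress_vertex_def sum.insert_if)
  also have "\<dots> = sum g E" using sum.subset_diff[OF del_vertex_subset finE, of g v] by simp
  finally show ?thesis by (simp add: cost)
qed

lemma is_fit_exists:
  assumes "\<And>i. i < m \<Longrightarrow> \<Sigma> i \<noteq> {}" and "\<And>j i. j < n \<Longrightarrow> i < m \<Longrightarrow> Sp j i \<in> \<Sigma> i"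
    and "inj_on lab {..<n}"
  shows "\<exists>f. is_fit m \<Sigma> n Sp V lab f"
proof -
  define f where
    "f v i = (if v \<in> lab ` {..<n} then Sp (inv_into {..<n} lab v) i else (SOME x. x \<in> \<Sigma> i))"
    for v i
  have "is_fit m \<Sigma> n Sp V lab f"
    using assms by (auto simp: is_fit_def f_def some_in_eq)
  then show ?thesis by blast
qed

lemma MP_cost_attained:
  assumes "\<exists>f. is_fit m \<Sigma> n Sp V lab f"
  obtains f where "is_fit m \<Sigma> n Sp V lab f" "fit_cost m E f = MP_cost m \<Sigma> n Sp V E lab"
  using LeastI_ex[of "\<lambda>c. \<exists>f. is_fit m \<Sigma> n Sp V lab f \<and> fit_cost m E f = c"] assms
  unfolding MP_cost_def by blast

lemma MP_cost_le: "is_fit m \<Sigma> n Sp V lab f \<Longrightarrow> MP_cost m \<Sigma> n Sp V E lab \<le> fit_cost m E f"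
  unfolding MP_cost_def by (rule Least_le) blast

lemma opt_MP_le: "tree_on n V E lab \<Longrightarrow> opt_MP m \<Sigma> n Sp \<le> MP_cost m \<Sigma> n Sp V E lab"
  unfolding opt_MP_def by (rule Least_le) blast

lemma most_compact_MP_tree_card_le:
  assumes compact: "most_compact_MP_tree m \<Sigma> n Sp V E lab"
    and f: "is_fit m \<Sigma> n Sp V lab f" "fit_cost m E f = MP_cost m \<Sigma> n Sp V E lab"
    and tree': "tree_on n V' E' lab" and "V' \<subseteq> V" and cheaper: "fit_cost m E' f \<le> fit_cost m E f"
  shows "card V \<le> card V'"
proof -
  have "is_fit m \<Sigma> n Sp V' lab f" using f(1) \<open>V' \<subseteq> V\<close> by (auto simp: is_fit_def)
  then have "MP_cost m \<Sigma> n Sp V' E' lab \<le> fit_cost m E f"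
    using MP_cost_le cheaper order_trans by blast
  also have "\<dots> = opt_MP m \<Sigma> n Sp"
    using f(2) compact by (simp add: most_compact_MP_tree_def MP_tree_def)
  finally have "MP_tree m \<Sigma> n Sp V' E' lab"
    using tree' opt_MP_le[OF tree', of m \<Sigma> Sp] by (simp add: MP_tree_def)
  then show ?thesis using compact by (auto simp: most_compact_MP_tree_def)
qed

lemma most_compact_MP_tree_inner_degree:
  assumes compact: "most_compact_MP_tree m \<Sigma> n Sp V E lab"
    and f: "is_fit m \<Sigma> n Sp V lab f" "fit_cost m E f = MP_cost m \<Sigma> n Sp V E lab"
    and "0 < n" and v: "v \<in> V - lab ` {..<n}"
  shows "3 \<le> card (neighbours E v)"
proof (rule ccontr)
  assume low: "\<not> 3 \<le> card (neighbours E v)"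
  have on: "tree_on n V E lab" using compact by (simp add: most_compact_MP_tree_def MP_tree_def)
  then have tree: "is_tree V E" and edges: "edges_on V E" and "finite V"
    and labels: "lab ` {..<n} \<subseteq> V - {v}"
    using v by (auto simp: tree_on_def is_tree_iff)
  have "neighbours E v \<noteq> {}"
    using tree v labels \<open>0 < n\<close> by (intro neighbours_nonempty[of V _ _ "lab 0"]) (auto simp: is_tree_iff)
  moreover have "finite (neighbours E v)"
    using neighbours_subset[OF edges] \<open>finite V\<close> by (rule finite_subset)
  ultimately have "0 < card (neighbours E v)" by (simp add: card_gt_0_iff)
  then have "card (neighbours E v) = 1 \<or> card (neighbours E v) = 2" using low by linarith
  then consider a where "neighbours E v = {a}" | a b where "neighbours E v = {a, b}" "a \<noteq> b"
    by (metis card_1_singletonE card_2_iff)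
  \<comment> \<open>deleting a leaf or suppressing a vertex of degree two gives a smaller tree that costs no more\<close>
  then obtain E' where "is_tree (V - {v}) E'" "fit_cost m E' f \<le> fit_cost m E f"
  proof cases
    case 1
    then show ?thesis
      using that is_tree_del_leaf[OF tree] v fit_cost_mono[OF edges_on_finite[OF edges \<open>finite V\<close>]]
        del_vertex_subset by blast
  next
    case 2
    then show ?thesis
      using that is_tree_suppress_vertex[OF tree] v fit_cost_suppress_vertex[OF edges \<open>finite V\<close>]
      by blast
  qed
  then have "card V \<le> card (V - {v})"
    using on labels by (intro most_compact_MP_tree_card_le[OF compact f]) (auto simp: tree_on_def)
  then show False using card_Diff1_less[OF \<open>finite V\<close>] v by fastforce
qed

theorem lemma4:
  fixes m n :: nat and \<Sigma> :: "nat \<Rightarrow> 'a set" and Sp :: "nat \<Rightarrow> nat \<Rightarrow> 'a"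
    and V :: "nat set" and E :: "(nat \<times> nat) set" and lab :: "nat \<Rightarrow> nat"
  assumes "n \<ge> 2" and "m \<ge> 1"
    and "\<And>i. i < m \<Longrightarrow> finite (\<Sigma> i) \<and> \<Sigma> i \<noteq> {}"
    and "\<And>j i. j < n \<Longrightarrow> i < m \<Longrightarrow> Sp j i \<in> \<Sigma> i"
    and "\<And>j k. j < n \<Longrightarrow> k < n \<Longrightarrow> j \<noteq> k \<Longrightarrow> \<exists>i<m. Sp j i \<noteq> Sp k i"
    and "most_compact_MP_tree m \<Sigma> n Sp V E lab"
  shows "card (V - lab ` {..<n}) \<le> n - 2"
proof -
  have on: "tree_on n V E lab"
    using assms(6) by (simp add: most_compact_MP_tree_def MP_tree_def)
  then have tree: "is_tree V E" and labels: "lab ` {..<n} \<subseteq> V" and inj: "inj_on lab {..<n}"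
    by (auto simp: tree_on_def)
  have "\<exists>f. is_fit m \<Sigma> n Sp V lab f"
    using assms(3,4) inj by (intro is_fit_exists) auto
  then obtain f where f: "is_fit m \<Sigma> n Sp V lab f" "fit_cost m E f = MP_cost m \<Sigma> n Sp V E lab"
    by (rule MP_cost_attained)
  have "card (V - lab ` {..<n}) + 2 \<le> card (lab ` {..<n})"
  proof (rule is_tree_card_inner_le[OF tree labels])
    fix v assume "v \<in> lab ` {..<n}"
    moreover obtain w where "w \<in> lab ` {..<n}" "w \<noteq> v"
    proof -
      have "lab 0 \<noteq> lab 1" using inj assms(1) by (auto dest: inj_onD)
      moreover have "lab 0 \<in> lab ` {..<n}" "lab 1 \<in> lab ` {..<n}" using assms(1) by auto
      ultimately show ?thesis using that by metis
    qed
    ultimately show "neighbours E v \<noteq> {}"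
      using tree labels by (intro neighbours_nonempty[of V]) (auto simp: is_tree_iff)
  next
    fix v assume "v \<in> V - lab ` {..<n}"
    then show "3 \<le> card (neighbours E v)"
      using assms(1) by (intro most_compact_MP_tree_inner_degree[OF assms(6) f]) auto
  qed
  then show ?thesis using card_image[OF inj] by simp
qed

end
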